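(* Let $T$ be a finite tree, let $\mathcal{F}$ be a finite family of subtrees of $T$, and let $G$ be the disjointness graph of $\mathcal{F}$ (vertices are the members of $\mathcal{F}$, two adjacent iff they are vertex-disjoint); equivalently, $G$ is the complement of a chordal graph. Then $c(G)\le p(G)\le 2$.
   Context: A comparability graph is a graph admitting a transitive orientation. $p(G)$ is the minimum number $m$ such that $E(G)$ is the union of the edge sets of $m$ pairwise edge-disjoint comparability subgraphs of $G$; $c(G)$ is the minimum number of comparability subgraphs of $G$ (not necessarily edge-disjoint) whose edge sets cover $E(G)$. *)

theory Defs
  imports Main
begin

definition simple_graph :: "'a set \<Rightarrow> 'a set set \<Rightarrow> bool" where
  "simple_graph V E \<longleftrightarrow> (\<forall>e\<in>E. e \<subseteq> V \<and> card e = 2)"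

definition is_tree :: "'a set \<Rightarrow> 'a set set \<Rightarrow> bool" where
  "is_tree V E \<longleftrightarrow> finite V \<and> V \<noteq> {} \<and> simple_graph V E \<and>
     (\<forall>u\<in>V. \<forall>v\<in>V. (\<lambda>x y. {x, y} \<in> E)\<^sup>*\<^sup>* u v) \<and>
     \<not> (\<exists>cs. length cs \<ge> 3 \<and> distinct cs \<and>
            (\<forall>i<length cs. {cs ! i, cs ! ((i + 1) mod length cs)} \<in> E))"

definition is_subtree :: "'a set \<Rightarrow> 'a set set \<Rightarrow> 'a set \<Rightarrow> bool" where
  "is_subtree V E S \<longleftrightarrow> S \<subseteq> V \<and> S \<noteq> {} \<and>
     (\<forall>u\<in>S. \<forall>v\<in>S. (\<lambda>x y. {x, y} \<in> E \<and> x \<in> S \<and> y \<in> S)\<^sup>*\<^sup>* u v)"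

definition disjointness_edges :: "'i set \<Rightarrow> ('i \<Rightarrow> 'a set) \<Rightarrow> 'i set set" where
  "disjointness_edges I S = {{i, j} | i j. i \<in> I \<and> j \<in> I \<and> i \<noteq> j \<and> S i \<inter> S j = {}}"

definition comparability_graph :: "'a set \<Rightarrow> 'a set set \<Rightarrow> bool" where
  "comparability_graph V E \<longleftrightarrow> (\<exists>R :: ('a \<times> 'a) set.
     R \<subseteq> V \<times> V \<and>
     (\<forall>u v. (u, v) \<in> R \<longrightarrow> {u, v} \<in> E) \<and>
     (\<forall>u v. {u, v} \<in> E \<longrightarrow> (u, v) \<in> R \<or> (v, u) \<in> R) \<and>
     (\<forall>u v. (u, v) \<in> R \<longrightarrow> (v, u) \<notin> R) \<and>
     trans R)"

definition comp_cover_number :: "'a set \<Rightarrow> 'a set set \<Rightarrow> nat" where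
  "comp_cover_number V E = (LEAST m. \<exists>F :: nat \<Rightarrow> 'a set set.
     (\<forall>i<m. F i \<subseteq> E \<and> comparability_graph V (F i)) \<and> (\<Union>i<m. F i) = E)"

definition comp_partition_number :: "'a set \<Rightarrow> 'a set set \<Rightarrow> nat" where
  "comp_partition_number V E = (LEAST m. \<exists>F :: nat \<Rightarrow> 'a set set.
     (\<forall>i<m. F i \<subseteq> E \<and> comparability_graph V (F i)) \<and> (\<Union>i<m. F i) = E \<and>
     (\<forall>i<m. \<forall>j<m. i \<noteq> j \<longrightarrow> F i \<inter> F j = {}))"

end

theory Submission
  imports Defs "HOL-Library.List_Lexorder" "HOL-Library.Sublist"
begin

(*
  Root the tree at a vertex r. Every subtree S_i then has a top t_i, its vertex nearest to r,
  and S_i contains the whole path from t_i to each of its vertices. Subtrees with incomparable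
  tops (in the ancestor order) are disjoint, so the edges of the disjointness graph split into
  the pairs with comparable tops and the pairs with incomparable tops. The first class is
  transitively oriented by "t_i is an ancestor of t_j": if S_i, S_j and S_j, S_k are disjoint
  and t_i <= t_j <= t_k, a common vertex of S_i and S_k would force t_j into S_i. The second
  class is transitively oriented by a depth-first order of the tops, because between a vertex
  and one of its descendants this order only visits descendants of the former. Hence p(G) <= 2,
  and c(G) <= p(G) since a partition is in particular a cover.
*)

section \<open>Comparability covers and partitions\<close>

definition comparability_cover :: "'a set \<Rightarrow> 'a set set \<Rightarrow> nat \<Rightarrow> (nat \<Rightarrow> 'a set set) \<Rightarrow> bool" where
  "comparability_cover V E m F \<longleftrightarrow>
     (\<forall>i<m. F i \<subseteq> E \<and> comparability_graph V (F i)) \<and> (\<Union>i<m. F i) = E"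

definition comparability_partition :: "'a set \<Rightarrow> 'a set set \<Rightarrow> nat \<Rightarrow> (nat \<Rightarrow> 'a set set) \<Rightarrow> bool" where
  "comparability_partition V E m F \<longleftrightarrow>
     comparability_cover V E m F \<and> (\<forall>i<m. \<forall>j<m. i \<noteq> j \<longrightarrow> F i \<inter> F j = {})"

lemma comp_cover_number_eq: "comp_cover_number V E = (LEAST m. \<exists>F. comparability_cover V E m F)"
  unfolding comp_cover_number_def comparability_cover_def ..

lemma comp_partition_number_eq:
  "comp_partition_number V E = (LEAST m. \<exists>F. comparability_partition V E m F)"
  unfolding comp_partition_number_def comparability_partition_def comparability_cover_def
  by (simp only: conj_assoc)

lemma comp_partition_number_le:
  "comparability_partition V E m F \<Longrightarrow> comp_partition_number V E \<le> m"
  unfolding comp_partition_number_eq by (blast intro: Least_le)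

lemma comp_cover_number_le_comp_partition_number:
  assumes "comparability_partition V E m F"
  shows "comp_cover_number V E \<le> comp_partition_number V E"
proof -
  obtain G where "comparability_partition V E (comp_partition_number V E) G"
    using LeastI_ex[of "\<lambda>m. \<exists>F. comparability_partition V E m F"] assms
    unfolding comp_partition_number_eq by blast
  then show ?thesis
    unfolding comp_cover_number_eq comparability_partition_def by (blast intro: Least_le)
qed

lemma comparability_partition_two_parts:
  assumes "comparability_graph V F0" and "comparability_graph V F1"
    and "F0 \<union> F1 = E" and "F0 \<inter> F1 = {}"
  shows "comparability_partition V E 2 (\<lambda>k. if k = 0 then F0 else F1)"
proof -
  have "{..<2::nat} = {0, 1}" by auto
  then show ?thesis using assms
    unfolding comparability_partition_def comparability_cover_def
    by (auto simp: less_2_cases_iff Un_commute)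
qed

definition pair_edges :: "'i set \<Rightarrow> ('i \<Rightarrow> 'i \<Rightarrow> bool) \<Rightarrow> 'i set set" where
  "pair_edges I P = {{i, j} | i j. i \<in> I \<and> j \<in> I \<and> i \<noteq> j \<and> P i j}"

lemma disjointness_edges_eq_pair_edges:
  "disjointness_edges I S = pair_edges I (\<lambda>i j. S i \<inter> S j = {})"
  unfolding disjointness_edges_def pair_edges_def ..

lemma pair_edges_cong:
  assumes "\<And>i j. i \<in> I \<Longrightarrow> j \<in> I \<Longrightarrow> i \<noteq> j \<Longrightarrow> P i j \<longleftrightarrow> Q i j"
  shows "pair_edges I P = pair_edges I Q"
  unfolding pair_edges_def using assms by blast

lemma pair_edges_Un: "pair_edges I P \<union> pair_edges I Q = pair_edges I (\<lambda>i j. P i j \<or> Q i j)"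
  unfolding pair_edges_def by blast

lemma pair_edges_disjoint:
  assumes "symp Q" and "\<And>i j. \<not> (P i j \<and> Q i j)"
  shows "pair_edges I P \<inter> pair_edges I Q = {}"
  using assms unfolding pair_edges_def symp_def by (auto simp: doubleton_eq_iff) blast

lemma comparability_graph_pair_edges:
  assumes "R \<subseteq> I \<times> I" and "asym R" and "trans R"
    and "\<And>i j. i \<in> I \<Longrightarrow> j \<in> I \<Longrightarrow> i \<noteq> j \<Longrightarrow> P i j \<longleftrightarrow> (i, j) \<in> R \<or> (j, i) \<in> R"
  shows "comparability_graph I (pair_edges I P)"
  unfolding comparability_graph_def
proof (intro exI[of _ R] conjI allI impI)
  fix u v assume uv: "(u, v) \<in> R"
  then have "u \<noteq> v" using \<open>asym R\<close> by (auto dest: asymD)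
  then show "{u, v} \<in> pair_edges I P" using uv assms(1,4) unfolding pair_edges_def by blast
next
  fix u v assume "{u, v} \<in> pair_edges I P"
  then obtain i j where "{u, v} = {i, j}" "i \<in> I" "j \<in> I" "i \<noteq> j" "P i j"
    unfolding pair_edges_def by blast
  then show "(u, v) \<in> R \<or> (v, u) \<in> R" using assms(4) by (auto simp: doubleton_eq_iff)
qed (use assms in \<open>auto dest: asymD\<close>)

lemma prefix_imp_less_eq_list: "prefix xs ys \<Longrightarrow> (xs :: 'a :: linorder list) \<le> ys"
  by (induction ys arbitrary: xs) (auto simp: prefix_Cons)

lemma prefix_if_between:
  fixes xs ys zs :: "'a :: linorder list"
  assumes "xs < ys" and "ys < zs" and "prefix xs zs"
  shows "prefix xs ys"
  using assms
proof (induction xs arbitrary: ys zs)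
  case (Cons x xs)
  obtain y ys' where ys: "ys = y # ys'" using Cons.prems(1) by (cases ys) auto
  obtain zs' where zs: "zs = x # zs'" "prefix xs zs'" using Cons.prems(3) by (cases zs) auto
  have "y = x" "xs < ys'" "ys' < zs'" using Cons.prems(1,2) unfolding ys zs(1) by auto
  then show ?case using Cons.IH zs(2) ys by simp
qed simp

lemma successively_map_upt:
  "successively P (map f [0..<n]) \<longleftrightarrow> (\<forall>i. Suc i < n \<longrightarrow> P (f i) (f (Suc i)))"
  by (auto simp: successively_conv_nth)

section \<open>Rooted trees\<close>

lemma funpow_le_split: "m \<le> n \<Longrightarrow> (f ^^ n) x = (f ^^ (n - m)) ((f ^^ m) x)"
  by (metis funpow_add le_add_diff_inverse2 o_apply)

definition is_cycle :: "'a set set \<Rightarrow> 'a list \<Rightarrow> bool" where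
  "is_cycle E cs \<longleftrightarrow> length cs \<ge> 3 \<and> distinct cs \<and>
     (\<forall>i<length cs. {cs ! i, cs ! ((i + 1) mod length cs)} \<in> E)"

lemma is_cycleI:
  assumes "length cs \<ge> 3" and "distinct cs"
    and "successively (\<lambda>x y. {x, y} \<in> E) cs" and "{last cs, hd cs} \<in> E"
  shows "is_cycle E cs"
  unfolding is_cycle_def
proof (intro conjI allI impI)
  fix i assume i: "i < length cs"
  show "{cs ! i, cs ! ((i + 1) mod length cs)} \<in> E"
  proof (cases "Suc i < length cs")
    case True
    then show ?thesis using successively_nth[OF assms(3)] by simp
  next
    case False
    then have "Suc i = length cs" using i by simp
    then have "i = length cs - 1" "(i + 1) mod length cs = 0" by simp_all
    moreover have "cs \<noteq> []" using assms(1) by auto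
    ultimately have "cs ! i = last cs" "cs ! ((i + 1) mod length cs) = hd cs"
      by (simp_all add: last_conv_nth hd_conv_nth)
    then show ?thesis using assms(4) by simp
  qed
qed (use assms in auto)

locale rooted_tree =
  fixes V :: "'a set" and E :: "'a set set" and r :: 'a and p :: "'a \<Rightarrow> 'a"
  assumes simple: "simple_graph V E"
    and acyclic: "\<not> (\<exists>cs. is_cycle E cs)"
    and parent_root: "p r = r"
    and parent_in_V: "x \<in> V \<Longrightarrow> p x \<in> V"
    and parent_edge: "x \<in> V \<Longrightarrow> x \<noteq> r \<Longrightarrow> {x, p x} \<in> E"
    and reaches_root: "x \<in> V \<Longrightarrow> \<exists>n. (p ^^ n) x = r"
begin

lemma funpow_parent_root [simp]: "(p ^^ n) r = r"
  by (induction n) (auto simp: parent_root)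

lemma funpow_parent_in_V: "x \<in> V \<Longrightarrow> (p ^^ n) x \<in> V"
  by (induction n) (auto simp: parent_in_V)

lemma funpow_parent_edge:
  "x \<in> V \<Longrightarrow> (p ^^ n) x \<noteq> r \<Longrightarrow> {(p ^^ n) x, (p ^^ Suc n) x} \<in> E"
  using parent_edge[OF funpow_parent_in_V] by simp

lemma funpow_parent_stays_root: "(p ^^ n) x = r \<Longrightarrow> n \<le> m \<Longrightarrow> (p ^^ m) x = r"
  using funpow_le_split[of n m p x] by simp

lemma funpow_parent_shortcut:
  assumes "(p ^^ a) x = (p ^^ b) x" and "a < b" and "b \<le> n"
  shows "(p ^^ n) x = (p ^^ (n - (b - a))) x"
proof -
  have "(p ^^ n) x = (p ^^ (n - b)) ((p ^^ b) x)"
    using assms(3) by (rule funpow_le_split)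
  also have "\<dots> = (p ^^ (n - b + a)) x" using assms(1) by (simp add: funpow_add)
  finally show ?thesis using assms(2,3) by simp
qed

definition depth :: "'a \<Rightarrow> nat" where
  "depth x = (LEAST n. (p ^^ n) x = r)"

lemma funpow_depth: "x \<in> V \<Longrightarrow> (p ^^ depth x) x = r"
  unfolding depth_def using reaches_root by (rule LeastI_ex)

lemma depth_le: "(p ^^ n) x = r \<Longrightarrow> depth x \<le> n"
  unfolding depth_def by (rule Least_le)

lemma depth_parent:
  assumes "x \<in> V" and "x \<noteq> r"
  shows "depth x = Suc (depth (p x))"
proof (rule antisym)
  have "(p ^^ Suc (depth (p x))) x = r"
    using funpow_depth[OF parent_in_V[OF assms(1)]] by (simp add: funpow_swap1)
  then show "depth x \<le> Suc (depth (p x))" by (rule depth_le)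
next
  obtain n where n: "depth x = Suc n"
    using funpow_depth[OF assms(1)] assms(2) by (cases "depth x") auto
  then have "(p ^^ n) (p x) = r"
    using funpow_depth[OF assms(1)] by (simp add: funpow_swap1)
  then show "Suc (depth (p x)) \<le> depth x" using n depth_le by simp
qed

definition ancestor :: "'a \<Rightarrow> 'a \<Rightarrow> bool" where
  "ancestor a b \<longleftrightarrow> (\<exists>n. a = (p ^^ n) b)"

lemma ancestor_refl [simp]: "ancestor a a"
  unfolding ancestor_def by (rule exI[of _ 0]) simp

lemma ancestor_parent [simp]: "ancestor (p b) b"
  unfolding ancestor_def by (rule exI[of _ 1]) simp

lemma ancestor_trans: "ancestor a b \<Longrightarrow> ancestor b c \<Longrightarrow> ancestor a c"
  unfolding ancestor_def by (metis funpow_add o_apply)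

lemma ancestor_in_V: "ancestor a b \<Longrightarrow> b \<in> V \<Longrightarrow> a \<in> V"
  unfolding ancestor_def using funpow_parent_in_V by blast

lemma ancestor_cases:
  assumes "ancestor a b"
  shows "a = b \<or> ancestor a (p b)"
proof -
  obtain n where n: "a = (p ^^ n) b" using assms unfolding ancestor_def by blast
  show ?thesis
  proof (cases n)
    case (Suc m)
    then have "a = (p ^^ m) (p b)" using n by (simp add: funpow_swap1)
    then show ?thesis unfolding ancestor_def by blast
  qed (use n in simp)
qed

lemma ancestors_linear:
  assumes "ancestor a x" and "ancestor b x"
  shows "ancestor a b \<or> ancestor b a"
proof -
  obtain m n where "a = (p ^^ m) x" "b = (p ^^ n) x" using assms unfolding ancestor_def by blast
  then show ?thesis
    unfolding ancestor_def using funpow_le_split[of m n p x] funpow_le_split[of n m p x]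
    by (cases "m \<le> n") auto
qed

lemma depth_less_if_proper_ancestor:
  assumes "b \<in> V" and "ancestor a b" and "a \<noteq> b"
  shows "depth a < depth b"
proof -
  obtain n where "a = (p ^^ n) b" using assms(2) unfolding ancestor_def by blast
  with assms(1,3) show ?thesis
  proof (induction n arbitrary: b)
    case (Suc n)
    have "b \<noteq> r" using Suc.prems(2,3) parent_root by auto
    then have "depth b = Suc (depth (p b))" using depth_parent Suc.prems(1) by blast
    moreover have "a = (p ^^ n) (p b)" using Suc.prems(3) by (simp add: funpow_swap1)
    ultimately show ?case
      using Suc.IH[of "p b"] parent_in_V[OF Suc.prems(1)] by (cases "a = p b") auto
  qed simp
qed

lemma ancestor_antisym: "b \<in> V \<Longrightarrow> ancestor a b \<Longrightarrow> ancestor b a \<Longrightarrow> a = b"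
  using depth_less_if_proper_ancestor[of b a] depth_less_if_proper_ancestor[of a b] ancestor_in_V
  by fastforce

text \<open>Minimality of \<open>k + l\<close> makes the parent chains from \<open>u\<close> and \<open>v\<close> meet only at
  their ends, so together with the edge \<open>{v, u}\<close> they form a cycle.\<close>

lemma parent_paths_cycle:
  assumes "u \<in> V" and "v \<in> V" and "{v, u} \<in> E" and "2 \<le> k + l"
    and meet: "(p ^^ k) u = (p ^^ l) v"
    and minimal: "\<And>k' l'. (p ^^ k') u = (p ^^ l') v \<Longrightarrow> k + l \<le> k' + l'"
  shows "is_cycle E (map (\<lambda>i. (p ^^ i) u) [0..<Suc k] @ rev (map (\<lambda>j. (p ^^ j) v) [0..<l]))"
    (is "is_cycle E (?up @ rev ?down)")
proof (rule is_cycleI)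
  have u_below_root: "(p ^^ i) u \<noteq> r" if "i < k" for i
    using minimal[of i l] meet funpow_parent_stays_root[of i u k] that by force
  have v_below_root: "(p ^^ j) v \<noteq> r" if "j < l" for j
    using minimal[of k j] meet funpow_parent_stays_root[of j v l] that by force
  have "inj_on (\<lambda>i. (p ^^ i) u) {0..<Suc k}"
  proof (rule linorder_inj_onI')
    fix i i' assume "i \<in> {0..<Suc k}" "i' \<in> {0..<Suc k}" "i < i'"
    then show "(p ^^ i) u \<noteq> (p ^^ i') u"
      using funpow_parent_shortcut[of i u i' k] minimal[of "k - (i' - i)" l] meet by auto
  qed
  moreover have "inj_on (\<lambda>j. (p ^^ j) v) {0..<l}"
  proof (rule linorder_inj_onI')
    fix j j' assume "j \<in> {0..<l}" "j' \<in> {0..<l}" "j < j'"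
    then show "(p ^^ j) v \<noteq> (p ^^ j') v"
      using funpow_parent_shortcut[of j v j' l] minimal[of k "l - (j' - j)"] meet by auto
  qed
  moreover have "(p ^^ i) u \<noteq> (p ^^ j) v" if "i \<le> k" "j < l" for i j
    using minimal[of i j] that by auto
  ultimately show "distinct (?up @ rev ?down)"
    by (auto simp: distinct_map simp del: upt_Suc)
  show "successively (\<lambda>x y. {x, y} \<in> E) (?up @ rev ?down)"
  proof -
    have "successively (\<lambda>x y. {x, y} \<in> E) ?up"
      using funpow_parent_edge[OF \<open>u \<in> V\<close> u_below_root]
      by (simp add: successively_map_upt del: upt_Suc)
    moreover have "successively (\<lambda>x y. {x, y} \<in> E) (rev ?down)"
      using funpow_parent_edge[OF \<open>v \<in> V\<close> v_below_root]
      by (simp add: successively_map_upt insert_commute)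
    moreover have "{last ?up, hd (rev ?down)} \<in> E" if "0 < l"
      using funpow_parent_edge[OF \<open>v \<in> V\<close> v_below_root, of "l - 1"] that meet
      by (simp add: insert_commute hd_rev last_map)
    ultimately show ?thesis by (auto simp: successively_append_iff simp del: upt_Suc)
  qed
  show "{last (?up @ rev ?down), hd (?up @ rev ?down)} \<in> E"
    using \<open>{v, u} \<in> E\<close> meet by (cases l) (simp_all add: last_rev hd_map last_map del: upt_Suc)
qed (use \<open>2 \<le> k + l\<close> in simp)

lemma edge_joins_parent:
  assumes "{u, v} \<in> E"
  shows "u = p v \<or> v = p u"
proof (rule ccontr)
  assume not_parent: "\<not> (u = p v \<or> v = p u)"
  have "card {u, v} = 2" and uv: "u \<in> V" "v \<in> V"
    using simple assms unfolding simple_graph_def by auto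
  then have "u \<noteq> v" by auto
  obtain m n where "(p ^^ m) u = r" "(p ^^ n) v = r" using reaches_root uv by blast
  then obtain k l where meet: "(p ^^ k) u = (p ^^ l) v"
    and minimal: "\<And>k' l'. (p ^^ k') u = (p ^^ l') v \<Longrightarrow> k + l \<le> k' + l'"
    using ex_has_least_nat[of "\<lambda>(k, l). (p ^^ k) u = (p ^^ l) v" "(m, n)" "\<lambda>(k, l). k + l"]
    by auto
  have "2 \<le> k + l"
  proof (rule ccontr)
    assume "\<not> 2 \<le> k + l"
    then consider "k = 0" "l = 0" | "k = 1" "l = 0" | "k = 0" "l = 1" by linarith
    then show False using meet \<open>u \<noteq> v\<close> not_parent by cases auto
  qed
  then have "is_cycle E (map (\<lambda>i. (p ^^ i) u) [0..<Suc k] @ rev (map (\<lambda>j. (p ^^ j) v) [0..<l]))"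
    using parent_paths_cycle uv assms meet minimal by (simp add: insert_commute)
  then show False using acyclic by blast
qed

section \<open>Subtrees and their tops\<close>

definition segment :: "'a \<Rightarrow> 'a \<Rightarrow> 'a set" where
  "segment a b = {z. ancestor a z \<and> ancestor z b}"

lemma segment_self: "b \<in> V \<Longrightarrow> segment b b = {b}"
  unfolding segment_def using ancestor_antisym by auto

lemma segment_mono: "ancestor b c \<Longrightarrow> segment a b \<subseteq> segment a c"
  unfolding segment_def using ancestor_trans by blast

lemma segment_child:
  assumes "ancestor a (p x)"
  shows "segment a x = insert x (segment a (p x))"
proof
  show "segment a x \<subseteq> insert x (segment a (p x))"
    unfolding segment_def using ancestor_cases by blast
  have "ancestor a x" using ancestor_trans[OF assms ancestor_parent] .
  then show "insert x (segment a (p x)) \<subseteq> segment a x"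
    using segment_mono[OF ancestor_parent] unfolding segment_def by auto
qed

lemma segment_from_parent:
  assumes "y \<in> V" and "ancestor y x"
  shows "segment (p y) x \<subseteq> insert (p y) (segment y x)"
proof
  fix z assume z: "z \<in> segment (p y) x"
  then consider "ancestor y z" | "ancestor z y"
    using ancestors_linear assms(2) unfolding segment_def by blast
  then show "z \<in> insert (p y) (segment y x)"
  proof cases
    case 2
    then have "z = y \<or> z = p y"
      using ancestor_cases ancestor_antisym[OF parent_in_V[OF assms(1)]] z
      unfolding segment_def by blast
    then show ?thesis using assms(2) unfolding segment_def by auto
  qed (use z in \<open>auto simp: segment_def\<close>)
qed

lemma walk_has_common_ancestor:
  assumes "S \<subseteq> V" and "x \<in> S"
    and "(\<lambda>a b. {a, b} \<in> E \<and> a \<in> S \<and> b \<in> S)\<^sup>*\<^sup>* x y"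
  shows "\<exists>m. ancestor m x \<and> ancestor m y \<and> segment m x \<subseteq> S \<and> segment m y \<subseteq> S"
  using assms(3)
proof (induction rule: rtranclp_induct)
  case base
  show ?case using segment_self[of x] assms(1,2) by (intro exI[of _ x]) auto
next
  case (step y y')
  then obtain m where m: "ancestor m x" "ancestor m y" "segment m x \<subseteq> S" "segment m y \<subseteq> S"
    by blast
  have y: "{y, y'} \<in> E" "y \<in> S" "y' \<in> S" using step.hyps(2) by auto
  then have "y \<in> V" "y' \<in> V" using assms(1) by auto
  from edge_joins_parent[OF y(1)] consider "y = p y'" | "y' = p y" by blast
  then show ?case
  proof cases
    case 1
    then have "ancestor m y'" using ancestor_trans[OF m(2)] by simp
    moreover have "segment m y' = insert y' (segment m y)" using segment_child m(2) 1 by simp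
    ultimately show ?thesis using m y by (intro exI[of _ m]) auto
  next
    case 2
    from ancestor_cases[OF m(2)] consider "m = y" | "ancestor m y'" unfolding 2 by blast
    then show ?thesis
    proof cases
      case 1
      have "ancestor y' x" using ancestor_trans[of y' y x] m(1) 1 2 by simp
      moreover have "segment y' x \<subseteq> S"
        using segment_from_parent[OF \<open>y \<in> V\<close>, of x] m(1,3) y(3) 1 2 by auto
      moreover have "segment y' y' \<subseteq> S" using segment_self \<open>y' \<in> V\<close> y(3) by simp
      ultimately show ?thesis by (intro exI[of _ y']) simp
    next
      case 2
      then show ?thesis using m segment_mono[of y' y m] \<open>y' = p y\<close> by auto
    qed
  qed
qed

definition is_top :: "'a set \<Rightarrow> 'a \<Rightarrow> bool" where
  "is_top S t \<longleftrightarrow> t \<in> S \<and> (\<forall>x\<in>S. ancestor t x \<and> segment t x \<subseteq> S)"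

lemma subtree_has_top:
  assumes "is_subtree V E S"
  shows "\<exists>t. is_top S t"
proof -
  have S: "S \<subseteq> V" "S \<noteq> {}"
    and walks: "\<forall>u\<in>S. \<forall>v\<in>S. (\<lambda>a b. {a, b} \<in> E \<and> a \<in> S \<and> b \<in> S)\<^sup>*\<^sup>* u v"
    using assms unfolding is_subtree_def by auto
  obtain t where t: "t \<in> S" and lowest: "\<And>y. y \<in> S \<Longrightarrow> depth t \<le> depth y"
    using ex_has_least_nat[of "\<lambda>x. x \<in> S" _ depth] S(2) by blast
  have "ancestor t x \<and> segment t x \<subseteq> S" if x: "x \<in> S" for x
  proof -
    obtain m where m: "ancestor m t" "ancestor m x" "segment m t \<subseteq> S" "segment m x \<subseteq> S"
      using walk_has_common_ancestor[OF S(1) t walks[rule_format, OF t x]] by blast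
    then have "m \<in> S" unfolding segment_def by auto
    then have "m = t"
      using depth_less_if_proper_ancestor[OF _ m(1)] lowest[of m] t S(1) by force
    then show ?thesis using m by simp
  qed
  then show ?thesis using t unfolding is_top_def by blast
qed

definition comparable :: "'a \<Rightarrow> 'a \<Rightarrow> bool" where
  "comparable a b \<longleftrightarrow> ancestor a b \<or> ancestor b a"

lemma is_topD:
  assumes "is_top S t"
  shows "t \<in> S" and "x \<in> S \<Longrightarrow> ancestor t x"
    and "x \<in> S \<Longrightarrow> ancestor t z \<Longrightarrow> ancestor z x \<Longrightarrow> z \<in> S"
  using assms unfolding is_top_def segment_def by blast+

lemma incomparable_tops_disjoint:
  assumes "is_top A a" and "is_top B b" and "\<not> comparable a b"
  shows "A \<inter> B = {}"
  using assms ancestors_linear is_topD(2) unfolding comparable_def by blast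

lemma comparability_graph_nested_tops:
  assumes tops: "\<forall>i\<in>I. is_top (S i) (T i)" and "\<forall>i\<in>I. S i \<subseteq> V"
  shows "comparability_graph I (pair_edges I (\<lambda>i j. S i \<inter> S j = {} \<and> comparable (T i) (T j)))"
proof -
  define R where "R = {(i, j). i \<in> I \<and> j \<in> I \<and> S i \<inter> S j = {} \<and> ancestor (T i) (T j)}"
  have "R \<subseteq> I \<times> I" unfolding R_def by blast
  moreover have "asym R"
  proof (rule asymI, rule notI)
    fix i j assume "(i, j) \<in> R" "(j, i) \<in> R"
    then have ij: "i \<in> I" "j \<in> I" "S i \<inter> S j = {}" "ancestor (T i) (T j)" "ancestor (T j) (T i)"
      unfolding R_def by auto
    have "T i \<in> S i" "T j \<in> S j" using tops ij(1,2) is_topD(1) by auto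
    moreover have "T i = T j" using ancestor_antisym ij(4,5) \<open>T j \<in> S j\<close> assms(2) ij(2) by blast
    ultimately show False using ij(3) by auto
  qed
  moreover have "trans R"
  proof (rule transI)
    fix i j k assume ij: "(i, j) \<in> R" and jk: "(j, k) \<in> R"
    have "S i \<inter> S k = {}"
    proof (rule ccontr)
      assume "S i \<inter> S k \<noteq> {}"
      then obtain x where x: "x \<in> S i" "x \<in> S k" by blast
      have "ancestor (T k) x" using is_topD(2) tops jk x(2) unfolding R_def by blast
      then have "ancestor (T j) x" using ancestor_trans jk unfolding R_def by blast
      then have "T j \<in> S i" using is_topD(3) tops ij x(1) unfolding R_def by blast
      moreover have "T j \<in> S j" using is_topD(1) tops ij unfolding R_def by blast
      ultimately show False using ij unfolding R_def by blast
    qed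
    then show "(i, k) \<in> R" using ij jk ancestor_trans unfolding R_def by blast
  qed
  ultimately show ?thesis
    by (rule comparability_graph_pair_edges) (auto simp: R_def comparable_def Int_commute)
qed

section \<open>Depth-first order\<close>

definition root_path :: "'a \<Rightarrow> 'a list" where
  "root_path x = rev (map (\<lambda>i. (p ^^ i) x) [0..<Suc (depth x)])"

lemma root_path_parent:
  assumes "x \<in> V" and "x \<noteq> r"
  shows "root_path x = root_path (p x) @ [x]"
proof -
  have "root_path x = rev (map (\<lambda>i. (p ^^ i) x) [0..<Suc (Suc (depth (p x)))])"
    unfolding root_path_def depth_parent[OF assms] ..
  also have "\<dots> = rev (x # map (\<lambda>i. (p ^^ Suc i) x) [0..<Suc (depth (p x))])"
    by (simp only: map_upt_Suc funpow_0)
  also have "\<dots> = root_path (p x) @ [x]"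
    unfolding root_path_def by (simp add: funpow_swap1)
  finally show ?thesis .
qed

lemma ancestor_if_in_root_path: "a \<in> set (root_path b) \<Longrightarrow> ancestor a b"
  unfolding root_path_def ancestor_def by auto

lemma in_root_path: "b \<in> set (root_path b)"
  unfolding root_path_def by (auto intro: image_eqI[of _ _ 0] simp del: upt_Suc)

lemma root_path_subset_V: "b \<in> V \<Longrightarrow> set (root_path b) \<subseteq> V"
  using ancestor_if_in_root_path ancestor_in_V by blast

lemma prefix_root_path:
  assumes "b \<in> V" and "ancestor a b"
  shows "prefix (root_path a) (root_path b)"
proof -
  obtain n where "a = (p ^^ n) b" using assms(2) unfolding ancestor_def by blast
  with assms(1) show ?thesis
  proof (induction n arbitrary: b)
    case (Suc n)
    then have "prefix (root_path a) (root_path (p b))"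
      using parent_in_V by (simp add: funpow_swap1)
    then show ?case
      using root_path_parent[OF Suc.prems(1)] parent_root by (cases "b = r") auto
  qed simp
qed

end

locale labelled_rooted_tree = rooted_tree +
  fixes f :: "'a \<Rightarrow> 'b :: linorder"
  assumes label_inj: "inj_on f V"
begin

text \<open>The lexicographic order of the labelled root paths is a depth-first preorder.\<close>

definition dfs_key :: "'a \<Rightarrow> 'b list" where
  "dfs_key x = map f (root_path x)"

lemma ancestor_if_prefix_dfs_key:
  assumes "a \<in> V" and "b \<in> V" and "prefix (dfs_key a) (dfs_key b)"
  shows "ancestor a b"
proof -
  obtain xs where xs: "prefix xs (root_path b)" "map f (root_path a) = map f xs"
    using prefix_map_rightE assms(3) unfolding dfs_key_def by metis
  have "set xs \<subseteq> V" using root_path_subset_V[OF assms(2)] set_mono_prefix[OF xs(1)] by blast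
  then have "root_path a = xs"
    using xs(2) root_path_subset_V[OF assms(1)] inj_on_subset[OF label_inj]
    by (simp add: inj_on_map_eq_map)
  then have "a \<in> set (root_path b)" using in_root_path set_mono_prefix[OF xs(1)] by blast
  then show ?thesis by (rule ancestor_if_in_root_path)
qed

lemma dfs_key_mono: "b \<in> V \<Longrightarrow> ancestor a b \<Longrightarrow> dfs_key a \<le> dfs_key b"
  unfolding dfs_key_def by (intro prefix_imp_less_eq_list map_mono_prefix prefix_root_path)

lemma inj_on_dfs_key: "inj_on dfs_key V"
  by (rule inj_onI) (metis ancestor_antisym ancestor_if_prefix_dfs_key prefix_order.refl)

lemma ancestor_if_dfs_key_between:
  assumes "a \<in> V" and "b \<in> V" and "c \<in> V" and "ancestor a c"
    and "dfs_key a < dfs_key b" and "dfs_key b < dfs_key c"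
  shows "ancestor a b"
proof -
  have "prefix (dfs_key a) (dfs_key c)"
    unfolding dfs_key_def using assms(3,4) by (intro map_mono_prefix prefix_root_path)
  then have "prefix (dfs_key a) (dfs_key b)" using prefix_if_between assms(5,6) by blast
  then show ?thesis using ancestor_if_prefix_dfs_key assms(1,2) by blast
qed

lemma comparability_graph_incomparable:
  assumes "T ` I \<subseteq> V"
  shows "comparability_graph I (pair_edges I (\<lambda>i j. \<not> comparable (T i) (T j)))"
proof -
  define R where "R = {(i, j). i \<in> I \<and> j \<in> I \<and> \<not> comparable (T i) (T j) \<and> dfs_key (T i) < dfs_key (T j)}"
  have "R \<subseteq> I \<times> I" unfolding R_def by blast
  moreover have "asym R" unfolding R_def by (auto intro: asymI)
  moreover have "trans R"
  proof (rule transI)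
    fix i j k assume ij: "(i, j) \<in> R" and jk: "(j, k) \<in> R"
    then have ijk: "i \<in> I" "j \<in> I" "k \<in> I" "dfs_key (T i) < dfs_key (T k)"
      unfolding R_def by auto
    have "\<not> ancestor (T i) (T k)"
      using ancestor_if_dfs_key_between[of "T i" "T j" "T k"] ij jk assms
      unfolding R_def comparable_def by auto
    moreover have "\<not> ancestor (T k) (T i)"
      using dfs_key_mono[of "T i" "T k"] ijk assms by force
    ultimately show "(i, k) \<in> R" using ijk unfolding R_def comparable_def by blast
  qed
  moreover have "\<not> comparable (T i) (T j) \<longleftrightarrow> (i, j) \<in> R \<or> (j, i) \<in> R"
    if "i \<in> I" "j \<in> I" for i j
  proof -
    have "dfs_key (T i) \<noteq> dfs_key (T j)" if "\<not> comparable (T i) (T j)"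
    proof
      assume "dfs_key (T i) = dfs_key (T j)"
      then have "T i = T j" using inj_onD[OF inj_on_dfs_key] assms \<open>i \<in> I\<close> \<open>j \<in> I\<close> by blast
      then show False using that unfolding comparable_def by simp
    qed
    then show ?thesis using that unfolding R_def comparable_def by (auto simp: neq_iff)
  qed
  ultimately show ?thesis by (rule comparability_graph_pair_edges)
qed

lemma disjointness_edges_two_comparability_parts:
  assumes "\<forall>i\<in>I. is_subtree V E (S i)"
  shows "\<exists>F0 F1. comparability_graph I F0 \<and> comparability_graph I F1 \<and>
    F0 \<union> F1 = disjointness_edges I S \<and> F0 \<inter> F1 = {}"
proof -
  have "\<forall>i\<in>I. \<exists>t. is_top (S i) t" using subtree_has_top assms by blast
  then have "\<exists>T. \<forall>i\<in>I. is_top (S i) (T i)" by (rule bchoice)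
  then obtain T where tops: "\<forall>i\<in>I. is_top (S i) (T i)" by blast
  have S_V: "\<forall>i\<in>I. S i \<subseteq> V" using assms unfolding is_subtree_def by blast
  then have "T ` I \<subseteq> V" using tops is_topD(1) by blast
  let ?F0 = "pair_edges I (\<lambda>i j. S i \<inter> S j = {} \<and> comparable (T i) (T j))"
  let ?F1 = "pair_edges I (\<lambda>i j. \<not> comparable (T i) (T j))"
  have "?F0 \<union> ?F1 = disjointness_edges I S"
    unfolding pair_edges_Un disjointness_edges_eq_pair_edges
    using incomparable_tops_disjoint tops by (intro pair_edges_cong) blast
  moreover have "?F0 \<inter> ?F1 = {}"
    by (rule pair_edges_disjoint) (auto simp: symp_def comparable_def)
  ultimately show ?thesis
    using comparability_graph_nested_tops[OF tops S_V]
      comparability_graph_incomparable[OF \<open>T ` I \<subseteq> V\<close>] by blast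
qed

end

section \<open>Rooting a tree\<close>

lemma connected_imp_parent_function:
  assumes "r \<in> V" and "\<forall>v\<in>V. (\<lambda>x y. {x, y} \<in> E)\<^sup>*\<^sup>* r v"
  shows "\<exists>p (d :: 'a \<Rightarrow> nat). p r = r \<and> (\<forall>x\<in>V. x \<noteq> r \<longrightarrow> {p x, x} \<in> E \<and> d (p x) < d x)"
proof -
  define d where "d x = (LEAST n. ((\<lambda>x y. {x, y} \<in> E) ^^ n) r x)" for x
  have "\<forall>x\<in>V - {r}. \<exists>u. {u, x} \<in> E \<and> d u < d x"
  proof
    fix x assume x: "x \<in> V - {r}"
    have "\<exists>n. ((\<lambda>x y. {x, y} \<in> E) ^^ n) r x"
      using assms(2) x by (simp add: rtranclp_power)
    then have walk: "((\<lambda>x y. {x, y} \<in> E) ^^ d x) r x"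
      unfolding d_def by (rule LeastI_ex)
    obtain m where m: "d x = Suc m" using walk x by (cases "d x") auto
    from walk[unfolded m] obtain u where "((\<lambda>x y. {x, y} \<in> E) ^^ m) r u" "{u, x} \<in> E"
      by (rule relpowp_Suc_E)
    moreover from this(1) have "d u \<le> m" unfolding d_def by (rule Least_le)
    ultimately show "\<exists>u. {u, x} \<in> E \<and> d u < d x" using m by auto
  qed
  then have "\<exists>q. \<forall>x\<in>V - {r}. {q x, x} \<in> E \<and> d (q x) < d x" by (rule bchoice)
  then obtain q where "\<forall>x\<in>V - {r}. {q x, x} \<in> E \<and> d (q x) < d x" by blast
  then show ?thesis by (intro exI[of _ "q(r := r)"] exI[of _ d]) simp
qed

lemma is_tree_imp_rooted_tree:
  assumes "is_tree V E" and "r \<in> V"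
  shows "\<exists>p. rooted_tree V E r p"
proof -
  have simple: "simple_graph V E" and acyclic: "\<not> (\<exists>cs. is_cycle E cs)"
    and connected: "\<forall>v\<in>V. (\<lambda>x y. {x, y} \<in> E)\<^sup>*\<^sup>* r v"
    using assms unfolding is_tree_def is_cycle_def by blast+
  obtain p and d :: "'a \<Rightarrow> nat" where p_root: "p r = r"
    and p_edge: "\<And>x. x \<in> V \<Longrightarrow> x \<noteq> r \<Longrightarrow> {p x, x} \<in> E \<and> d (p x) < d x"
    using connected_imp_parent_function[OF assms(2) connected] by blast
  have p_V: "p x \<in> V" if "x \<in> V" for x
  proof (cases "x = r")
    case False
    then show ?thesis using p_edge[OF that] simple unfolding simple_graph_def by blast
  qed (use p_root assms(2) in simp)
  have reaches_root: "\<exists>n. (p ^^ n) x = r" if "x \<in> V" for x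
    using that
  proof (induction "d x" arbitrary: x rule: less_induct)
    case less
    show ?case
    proof (cases "x = r")
      case True
      then show ?thesis by (intro exI[of _ 0]) simp
    next
      case False
      then have "d (p x) < d x" "p x \<in> V" using p_edge p_V less.prems by auto
      then obtain n where "(p ^^ n) (p x) = r" using less.hyps by blast
      then have "(p ^^ Suc n) x = r" by (simp add: funpow_swap1)
      then show ?thesis by blast
    qed
  qed
  have "{x, p x} \<in> E" if "x \<in> V" "x \<noteq> r" for x
    using p_edge[OF that] by (simp add: insert_commute)
  then have "rooted_tree V E r p"
    by (intro rooted_tree.intro[OF simple acyclic p_root p_V _ reaches_root])
  then show ?thesis by blast
qed

theorem theorem6:
  fixes VT :: "'a set" and ET :: "'a set set"
    and I :: "'i set" and S :: "'i \<Rightarrow> 'a set"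
  assumes "is_tree VT ET"
    and "finite I"
    and "\<forall>i\<in>I. is_subtree VT ET (S i)"
  shows "comp_cover_number I (disjointness_edges I S)
           \<le> comp_partition_number I (disjointness_edges I S)
         \<and> comp_partition_number I (disjointness_edges I S) \<le> 2"
proof -
  have "finite VT" and "VT \<noteq> {}" using assms(1) by (simp_all add: is_tree_def)
  obtain f :: "'a \<Rightarrow> nat" where "inj_on f VT"
    using finite_imp_inj_to_nat_seg[OF \<open>finite VT\<close>] by blast
  obtain r where "r \<in> VT" using \<open>VT \<noteq> {}\<close> by blast
  then obtain p where "rooted_tree VT ET r p" using is_tree_imp_rooted_tree[OF assms(1)] by blast
  then interpret labelled_rooted_tree VT ET r p f
    using \<open>inj_on f VT\<close> by (intro labelled_rooted_tree.intro labelled_rooted_tree_axioms.intro)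
  obtain F0 F1 where "comparability_graph I F0" "comparability_graph I F1"
    "F0 \<union> F1 = disjointness_edges I S" "F0 \<inter> F1 = {}"
    using disjointness_edges_two_comparability_parts[OF assms(3)] by blast
  then have partition:
    "comparability_partition I (disjointness_edges I S) 2 (\<lambda>k. if k = 0 then F0 else F1)"
    by (rule comparability_partition_two_parts)
  show ?thesis
    using comp_cover_number_le_comp_partition_number[OF partition]
      comp_partition_number_le[OF partition] by simp
qed

end
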